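(* The superconnecting filter $\mathcal{F}_\infty$ of the Kirch space satisfies $$\mathcal{F}_\infty=\{B\subseteq\mathbb{N}:\exists q\in\mathbb{N}\text{ odd and square-free with }q\mathbb{N}\subseteq B\}.$$
   Context: $\mathbb{N}=\{1,2,\dots\}$, $\mathbb{N}_0=\{0\}\cup\mathbb{N}$, $q\mathbb{N}=\{qn:n\in\mathbb{N}\}$. The Kirch topology $\tau_K$ on $\mathbb{N}$ is generated by the base of all $a+b\mathbb{N}_0=\{a+bn:n\in\mathbb{N}_0\}$ with $a,b\in\mathbb{N}$ coprime and $b$ square-free (not divisible by the square of a prime). Closures are in $\tau_K$. The superconnecting filter is $\mathcal{F}_\infty=\{B\subseteq\mathbb{N}:\exists n\in\mathbb{N}\ \exists U_1,\dots,U_n\in\tau_K\setminus\{\emptyset\}\ (\overline{U_1}\cap\dots\cap\overline{U_n}\subseteq B)\}$. *)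

theory Defs
  imports "HOL-Analysis.Analysis" "HOL-Computational_Algebra.Squarefree"
begin

definition Npos :: "nat set" where "Npos = {n. n \<ge> 1}"

definition arith_prog :: "nat \<Rightarrow> nat \<Rightarrow> nat set" where
  "arith_prog a b = {a + b * n | n. True}"

definition kirch_base :: "nat set set" where
  "kirch_base = {arith_prog a b | a b. a \<ge> 1 \<and> b \<ge> 1 \<and> coprime a b \<and> squarefree b}"

definition kirch_topology :: "nat topology" where
  "kirch_topology = topology_generated_by kirch_base"

definition mult_set :: "nat \<Rightarrow> nat set" where
  "mult_set q = {q * n | n. n \<ge> 1}"

definition superconnecting_filter :: "nat set set" where
  "superconnecting_filter = {B. B \<subseteq> Npos \<and>
     (\<exists>n \<ge> 1. \<exists>U :: nat \<Rightarrow> nat set.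
        (\<forall>i<n. openin kirch_topology (U i) \<and> U i \<noteq> {}) \<and>
        (\<Inter>i<n. kirch_topology closure_of (U i)) \<subseteq> B)}"

end

theory Submission
  imports Defs
begin

text \<open>
  Every point x of an open set has a basic neighbourhood x + d N_0 with d squarefree and
  coprime to x. If y is a multiple of the odd part b' of a squarefree b and y + d N_0 is such a
  neighbourhood of y, then gcd d b is coprime to b' and divides 2 b', hence divides 2; when it
  equals 2, both y and a are odd. So y and a agree modulo gcd d b, and by the Chinese remainder
  theorem y + d N_0 meets a + b N_0: the closure of a + b N_0 contains b' N. Taking lcms, every
  finite intersection of closures of nonempty open sets contains q N for an odd squarefree q.

  Conversely, let q be odd and squarefree. If x is not divisible by a prime p dividing q, then
  x + p N_0 is a neighbourhood of x that meets only one of the residue classes 1 and 2 modulo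
  the odd prime p, so x is not in both closures of 1 + q N_0 and 2 + q N_0. Hence the
  intersection of these two closures lies in q N.
\<close>

lemma squarefree_lcm:
  fixes a b :: "'a :: {factorial_semiring_gcd, normalization_semidom_multiplicative}"
  assumes "squarefree a" "squarefree b"
  shows "squarefree (lcm a b)"
proof -
  have nz: "a \<noteq> 0" "b \<noteq> 0"
    using assms by auto
  have "multiplicity p (lcm a b) \<le> 1" if "prime p" for p
    using that assms nz by (simp add: multiplicity_lcm squarefree_factorial_semiring'')
  moreover have "lcm a b \<noteq> 0"
    using nz by (simp add: lcm_eq_0_iff)
  ultimately show ?thesis
    by (simp add: squarefree_factorial_semiring'')
qed

lemma squarefree_dvd_if_prime_divisors_dvd:
  fixes q x :: "'a :: factorial_semiring"
  assumes "squarefree q" "x \<noteq> 0" and prime_dvd: "\<And>p. prime p \<Longrightarrow> p dvd q \<Longrightarrow> p dvd x"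
  shows "q dvd x"
proof -
  have "q \<noteq> 0"
    using assms(1) by auto
  have "multiplicity p q \<le> multiplicity p x" if p: "prime p" for p
  proof (cases "p dvd q")
    case True
    then have "0 < multiplicity p x"
      using prime_dvd p assms(2) by (simp add: prime_multiplicity_gt_zero_iff)
    moreover have "multiplicity p q \<le> 1"
      using assms(1) \<open>q \<noteq> 0\<close> p by (simp add: squarefree_factorial_semiring'')
    ultimately show ?thesis by linarith
  qed (simp add: not_dvd_imp_multiplicity_0)
  then show ?thesis
    using \<open>q \<noteq> 0\<close> assms(2) by (simp add: prime_multiplicity_le_imp_dvd)
qed

lemma odd_lcm_nat:
  fixes q r :: nat
  assumes "odd q" "odd r"
  shows "odd (lcm q r)"
proof
  assume "even (lcm q r)"
  moreover have "lcm q r dvd q * r"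
    by (simp add: lcm_least)
  ultimately have "even (q * r)"
    by (rule dvd_trans)
  then show False
    using assms by simp
qed

lemma coprime_lcm_right_nat:
  fixes x d e :: nat
  assumes "coprime x d" "coprime x e"
  shows "coprime x (lcm d e)"
proof -
  have "lcm d e dvd d * e"
    by (simp add: lcm_least)
  then show ?thesis
    using assms by (meson coprime_divisors coprime_mult_right_iff dvd_refl)
qed

lemma mem_arith_prog_self: "a \<in> arith_prog a b"
  by (auto simp: arith_prog_def intro: exI[of _ 0])

lemma arith_prog_antimono:
  assumes "d dvd e"
  shows "arith_prog x e \<subseteq> arith_prog x d"
  using assms by (auto simp: arith_prog_def mult.assoc)

lemma arith_prog_subset_if_mem:
  assumes "y \<in> arith_prog a b"
  shows "arith_prog y b \<subseteq> arith_prog a b"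
proof
  fix z assume "z \<in> arith_prog y b"
  then obtain k n where "y = a + b * k" "z = y + b * n"
    using assms by (auto simp: arith_prog_def)
  then have "z = a + b * (k + n)"
    by (simp add: algebra_simps)
  then show "z \<in> arith_prog a b"
    by (auto simp: arith_prog_def)
qed

lemma coprime_if_mem_arith_prog:
  assumes "y \<in> arith_prog a b" "coprime a b"
  shows "coprime y b"
proof -
  obtain k where "y = a + b * k"
    using assms(1) by (auto simp: arith_prog_def)
  then show ?thesis
    using assms(2) by (metis coprime_iff_gcd_eq_1 gcd.commute gcd_add_mult add.commute mult.commute)
qed

lemma arith_prog_meet_if_le:
  fixes a b d x :: nat
  assumes "b \<noteq> 0" "a \<le> x" "x mod gcd d b = a mod gcd d b"
  shows "\<exists>n m. x + d * n = a + b * m"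
proof -
  obtain s where s: "x = a + gcd d b * s"
    using assms(2,3) by (auto elim: mod_eq_nat1E)
  obtain u v where uv: "b * u = d * v + gcd b d"
    using bezout_nat[OF assms(1)] by blast
  have "b * (u * s) = (b * u) * s"
    by (simp only: mult.assoc)
  also have "\<dots> = d * (v * s) + gcd d b * s"
    unfolding uv by (simp add: gcd.commute algebra_simps)
  finally have "a + b * (u * s) = x + d * (v * s)"
    using s by simp
  then show ?thesis
    by metis
qed

lemma arith_prog_Int_nonempty_iff:
  fixes a b d x :: nat
  assumes "d \<noteq> 0" "b \<noteq> 0"
  shows "arith_prog x d \<inter> arith_prog a b \<noteq> {} \<longleftrightarrow> x mod gcd d b = a mod gcd d b"
proof
  assume "arith_prog x d \<inter> arith_prog a b \<noteq> {}"
  then obtain n m where nm: "x + d * n = a + b * m"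
    by (auto simp: arith_prog_def)
  obtain k l where "d = gcd d b * k" "b = gcd d b * l"
    by (meson dvdE gcd_dvd1 gcd_dvd2)
  with nm have "(x + gcd d b * (k * n)) mod gcd d b = (a + gcd d b * (l * m)) mod gcd d b"
    by (metis mult.assoc)
  then show "x mod gcd d b = a mod gcd d b"
    by simp
next
  assume cong: "x mod gcd d b = a mod gcd d b"
  have "\<exists>n m. x + d * n = a + b * m"
  proof (cases "a \<le> x")
    case True
    then show ?thesis
      using arith_prog_meet_if_le assms cong by blast
  next
    case False
    then show ?thesis
      using arith_prog_meet_if_le[of d x a b] assms cong by (metis gcd.commute nat_le_linear)
  qed
  then show "arith_prog x d \<inter> arith_prog a b \<noteq> {}"
    by (auto simp: arith_prog_def)
qed

lemma topspace_kirch_topology: "topspace kirch_topology = Npos"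
proof -
  have "x \<in> arith_prog 1 1" if "x \<in> Npos" for x
  proof -
    have "x = 1 + 1 * (x - 1)"
      using that by (simp add: Npos_def)
    then show ?thesis
      unfolding arith_prog_def by blast
  qed
  moreover have "arith_prog 1 1 \<in> kirch_base"
    unfolding kirch_base_def by (intro CollectI exI[of _ "1::nat"]) simp
  moreover have "\<Union>kirch_base \<subseteq> Npos"
    by (auto simp: kirch_base_def arith_prog_def Npos_def)
  ultimately show ?thesis
    unfolding kirch_topology_def by auto
qed

lemma openin_kirch_arith_prog:
  assumes "a \<noteq> 0" "coprime a b" "squarefree b"
  shows "openin kirch_topology (arith_prog a b)"
  unfolding kirch_topology_def
proof (rule topology_generated_by_Basis)
  have "a \<ge> 1" "b \<ge> 1"
    using assms(1,3) by (simp_all add: Suc_le_eq) (metis gr0I not_squarefree_0)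
  then show "arith_prog a b \<in> kirch_base"
    unfolding kirch_base_def using assms(2,3) by blast
qed

lemma openin_kirch_imp_basic_nbhd:
  assumes "openin kirch_topology W" "x \<in> W"
  shows "\<exists>d. coprime x d \<and> squarefree d \<and> arith_prog x d \<subseteq> W"
proof -
  have "generate_topology_on kirch_base W"
    using assms(1) unfolding kirch_topology_def by (rule openin_topology_generated_by)
  then have "\<forall>x\<in>W. \<exists>d. coprime x d \<and> squarefree d \<and> arith_prog x d \<subseteq> W"
  proof (induction rule: generate_topology_on.induct)
    case Empty
    then show ?case by simp
  next
    case (Int A B)
    show ?case
    proof
      fix x assume "x \<in> A \<inter> B"
      then obtain d d' where d: "coprime x d" "squarefree d" "arith_prog x d \<subseteq> A"
        and d': "coprime x d'" "squarefree d'" "arith_prog x d' \<subseteq> B"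
        using Int.IH by blast
      have "coprime x (lcm d d')"
        using d(1) d'(1) by (rule coprime_lcm_right_nat)
      moreover have "squarefree (lcm d d')"
        using d(2) d'(2) by (rule squarefree_lcm)
      moreover have "arith_prog x (lcm d d') \<subseteq> A \<inter> B"
        using arith_prog_antimono[of d "lcm d d'" x] arith_prog_antimono[of d' "lcm d d'" x] d d'
        by auto
      ultimately show "\<exists>e. coprime x e \<and> squarefree e \<and> arith_prog x e \<subseteq> A \<inter> B"
        by blast
    qed
  next
    case (UN K)
    then show ?case by blast
  next
    case (Basis s)
    then obtain a b where s: "s = arith_prog a b" "coprime a b" "squarefree b"
      by (auto simp: kirch_base_def)
    show ?case
    proof
      fix x assume "x \<in> s"
      then have "coprime x b" "arith_prog x b \<subseteq> s"
        using s coprime_if_mem_arith_prog arith_prog_subset_if_mem by blast+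
      then show "\<exists>d. coprime x d \<and> squarefree d \<and> arith_prog x d \<subseteq> s"
        using s(3) by blast
    qed
  qed
  then show ?thesis
    using assms(2) by blast
qed

lemma in_kirch_closure_iff:
  "x \<in> kirch_topology closure_of S \<longleftrightarrow>
     x \<in> Npos \<and> (\<forall>d. coprime x d \<longrightarrow> squarefree d \<longrightarrow> arith_prog x d \<inter> S \<noteq> {})"
proof -
  have meets_iff: "(\<forall>T. x \<in> T \<and> openin kirch_topology T \<longrightarrow> (\<exists>y. y \<in> S \<and> y \<in> T)) \<longleftrightarrow>
        (\<forall>d. coprime x d \<longrightarrow> squarefree d \<longrightarrow> arith_prog x d \<inter> S \<noteq> {})" if "x \<in> Npos"
  proof (intro iffI allI impI)
    fix d assume meets: "\<forall>T. x \<in> T \<and> openin kirch_topology T \<longrightarrow> (\<exists>y. y \<in> S \<and> y \<in> T)"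
      and "coprime x d" "squarefree d"
    have "openin kirch_topology (arith_prog x d)"
      using that \<open>coprime x d\<close> \<open>squarefree d\<close>
      by (intro openin_kirch_arith_prog) (simp_all add: Npos_def)
    then show "arith_prog x d \<inter> S \<noteq> {}"
      using meets[rule_format, OF conjI[OF mem_arith_prog_self]] by blast
  next
    fix T assume meets: "\<forall>d. coprime x d \<longrightarrow> squarefree d \<longrightarrow> arith_prog x d \<inter> S \<noteq> {}"
      and "x \<in> T \<and> openin kirch_topology T"
    then obtain d where "coprime x d" "squarefree d" "arith_prog x d \<subseteq> T"
      using openin_kirch_imp_basic_nbhd by blast
    then show "\<exists>y. y \<in> S \<and> y \<in> T"
      using meets by blast
  qed
  show ?thesis
    unfolding in_closure_of topspace_kirch_topology by (rule conj_cong[OF refl meets_iff])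
qed

definition odd_part :: "nat \<Rightarrow> nat" where
  "odd_part b = (if even b then b div 2 else b)"

lemma odd_part_dvd: "odd_part b dvd b"
  by (auto simp: odd_part_def)

lemma dvd_double_odd_part: "b dvd 2 * odd_part b"
  by (auto simp: odd_part_def)

lemma squarefree_odd_part: "squarefree b \<Longrightarrow> squarefree (odd_part b)"
  using odd_part_dvd squarefree_mono by blast

lemma odd_odd_part:
  assumes "squarefree b"
  shows "odd (odd_part b)"
proof
  assume "even (odd_part b)"
  then obtain c where c: "odd_part b = 2 * c"
    by blast
  then have "even b"
    unfolding odd_part_def by presburger
  with c have "b = 2 ^ 2 * c"
    unfolding odd_part_def by simp presburger
  then have "(2 :: nat) ^ 2 dvd b"
    by simp
  then have "(2 :: nat) dvd 1"
    by (rule squarefreeD[OF assms])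
  then show False
    by simp
qed

lemma gcd_dvd_two_if_odd_part_dvd:
  fixes b d x :: nat
  assumes "coprime x d" "odd_part b dvd x"
  shows "gcd d b dvd 2"
proof -
  have "coprime (gcd d b) (odd_part b)"
    using assms by (meson coprime_commute coprime_divisors gcd_dvd1)
  moreover have "gcd d b dvd 2 * odd_part b"
    using dvd_double_odd_part dvd_trans gcd_dvd2 by blast
  ultimately show ?thesis
    by (simp add: coprime_dvd_mult_left_iff)
qed

lemma mod_gcd_eq_if_odd_part_dvd:
  fixes a b d x :: nat
  assumes "coprime x d" "coprime a b" "odd_part b dvd x"
  shows "x mod gcd d b = a mod gcd d b"
proof -
  have "gcd d b dvd 2"
    using assms(1,3) by (rule gcd_dvd_two_if_odd_part_dvd)
  then consider "gcd d b = 1" | "gcd d b = 2"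
    using dvd_imp_le[of "gcd d b" 2] by (cases "gcd d b") (auto simp: le_Suc_eq)
  then show ?thesis
  proof cases
    case 2
    then have "odd x" "odd a"
      using assms(1,2) gcd_dvd1[of d b] gcd_dvd2[of d b]
      by (metis coprime_common_divisor odd_one)+
    with 2 show ?thesis
      by (simp add: odd_iff_mod_2_eq_one)
  qed simp
qed

lemma mult_set_odd_part_subset_kirch_closure:
  assumes "coprime a b" "squarefree b"
  shows "mult_set (odd_part b) \<subseteq> kirch_topology closure_of (arith_prog a b)"
proof
  fix y assume "y \<in> mult_set (odd_part b)"
  then obtain k where k: "y = odd_part b * k" "k \<ge> 1"
    by (auto simp: mult_set_def)
  have "odd_part b \<noteq> 0"
    using assms(2) squarefree_odd_part by (metis not_squarefree_0)
  then have "y \<in> Npos"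
    using k by (simp add: Npos_def)
  moreover have "arith_prog y d \<inter> arith_prog a b \<noteq> {}" if "coprime y d" "squarefree d" for d
  proof -
    have "d \<noteq> 0" "b \<noteq> 0"
      using that(2) assms(2) by (metis not_squarefree_0)+
    then show ?thesis
      using mod_gcd_eq_if_odd_part_dvd[OF that(1) assms(1)] k(1)
      by (simp add: arith_prog_Int_nonempty_iff)
  qed
  ultimately show "y \<in> kirch_topology closure_of (arith_prog a b)"
    by (simp add: in_kirch_closure_iff)
qed

lemma ex_mult_set_subset_kirch_closure:
  assumes "openin kirch_topology U" "U \<noteq> {}"
  shows "\<exists>q. odd q \<and> squarefree q \<and> mult_set q \<subseteq> kirch_topology closure_of U"
proof -
  obtain x where "x \<in> U"
    using assms(2) by blast
  then obtain d where d: "coprime x d" "squarefree d" "arith_prog x d \<subseteq> U"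
    using assms(1) openin_kirch_imp_basic_nbhd by blast
  have "mult_set (odd_part d) \<subseteq> kirch_topology closure_of U"
    using mult_set_odd_part_subset_kirch_closure[OF d(1,2)] closure_of_mono[OF d(3)] by blast
  then show ?thesis
    using d(2) odd_odd_part squarefree_odd_part by blast
qed

lemma mult_set_antimono:
  assumes "q dvd r" "r \<noteq> 0"
  shows "mult_set r \<subseteq> mult_set q"
proof
  fix y assume "y \<in> mult_set r"
  then obtain n where n: "y = r * n" "n \<ge> 1"
    by (auto simp: mult_set_def)
  obtain k where k: "r = q * k"
    using assms(1) by blast
  then have "k \<ge> 1"
    using assms(2) by (simp add: Suc_le_eq)
  then have "k * n \<ge> 1"
    using n(2) by (metis mult_le_mono nat_1_eq_mult_iff)
  moreover have "y = q * (k * n)"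
    using n(1) k by (simp add: mult.assoc)
  ultimately show "y \<in> mult_set q"
    by (auto simp: mult_set_def)
qed

lemma ex_mult_set_subset_INT:
  assumes "finite I" "\<forall>i\<in>I. \<exists>q. odd q \<and> squarefree q \<and> mult_set q \<subseteq> C i"
  shows "\<exists>q. odd q \<and> squarefree q \<and> mult_set q \<subseteq> (\<Inter>i\<in>I. C i)"
  using assms
proof (induction I rule: finite_induct)
  case empty
  then show ?case
    by (intro exI[of _ 1]) simp
next
  case (insert j I)
  then obtain q r where q: "odd q" "squarefree q" "mult_set q \<subseteq> (\<Inter>i\<in>I. C i)"
    and r: "odd r" "squarefree r" "mult_set r \<subseteq> C j"
    by auto
  have "lcm q r \<noteq> 0"
    using q(2) r(2) by (metis lcm_eq_0_iff not_squarefree_0)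
  then have "mult_set (lcm q r) \<subseteq> mult_set q \<inter> mult_set r"
    by (simp add: mult_set_antimono)
  then have "mult_set (lcm q r) \<subseteq> (\<Inter>i\<in>insert j I. C i)"
    unfolding INT_insert using q(3) r(3) by blast
  moreover have "odd (lcm q r)" "squarefree (lcm q r)"
    using q r by (simp_all add: odd_lcm_nat squarefree_lcm)
  ultimately show ?case
    by blast
qed

lemma mod_prime_eq_if_in_kirch_closure:
  assumes "x \<in> kirch_topology closure_of arith_prog c q" "squarefree q"
    and p: "prime p" "p dvd q" "coprime x p"
  shows "x mod p = c mod p"
proof -
  have "arith_prog x p \<inter> arith_prog c q \<noteq> {}"
    using assms(1) p by (simp add: in_kirch_closure_iff squarefree_prime)
  moreover have "p \<noteq> 0" "q \<noteq> 0"
    using p(1) assms(2) by (metis not_prime_0, metis not_squarefree_0)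
  moreover have "gcd p q = p"
    using p(2) by (rule gcd_nat.absorb1)
  ultimately show ?thesis
    by (simp add: arith_prog_Int_nonempty_iff)
qed

lemma kirch_closure_Int_subset_mult_set:
  assumes "odd q" "squarefree q"
  shows "kirch_topology closure_of arith_prog 1 q \<inter> kirch_topology closure_of arith_prog 2 q
           \<subseteq> mult_set q"
proof
  fix x assume x: "x \<in> kirch_topology closure_of arith_prog 1 q \<inter>
                       kirch_topology closure_of arith_prog 2 q"
  then have "x \<noteq> 0"
    by (simp add: in_kirch_closure_iff Npos_def)
  have "p dvd x" if p: "prime p" "p dvd q" for p
  proof (rule ccontr)
    assume "\<not> p dvd x"
    then have "coprime x p"
      using p(1) by (simp add: prime_imp_coprime coprime_commute)
    then have "1 mod p = 2 mod p"
      using x p assms(2) mod_prime_eq_if_in_kirch_closure by (metis IntD1 IntD2)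
    moreover have "p \<noteq> 2"
      using p(2) assms(1) by auto
    then have "p > 2"
      using prime_ge_2_nat[OF p(1)] by linarith
    ultimately show False
      by simp
  qed
  then have "q dvd x"
    using assms(2) \<open>x \<noteq> 0\<close> by (simp add: squarefree_dvd_if_prime_divisors_dvd)
  then obtain k where "x = q * k"
    by blast
  moreover have "k \<ge> 1"
    using \<open>x \<noteq> 0\<close> calculation by (simp add: Suc_le_eq)
  ultimately show "x \<in> mult_set q"
    by (auto simp: mult_set_def)
qed

lemma ex_mult_set_subset_INT_kirch_closure:
  fixes n :: nat and U :: "nat \<Rightarrow> nat set"
  assumes "\<forall>i<n. openin kirch_topology (U i) \<and> U i \<noteq> {}"
  shows "\<exists>q. odd q \<and> squarefree q \<and> mult_set q \<subseteq> (\<Inter>i<n. kirch_topology closure_of (U i))"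
proof -
  have "\<forall>i\<in>{..<n}. \<exists>q. odd q \<and> squarefree q \<and> mult_set q \<subseteq> kirch_topology closure_of (U i)"
  proof
    fix i assume "i \<in> {..<n}"
    then have "openin kirch_topology (U i)" "U i \<noteq> {}"
      using assms by auto
    then show "\<exists>q. odd q \<and> squarefree q \<and> mult_set q \<subseteq> kirch_topology closure_of (U i)"
      by (rule ex_mult_set_subset_kirch_closure)
  qed
  then show ?thesis
    by (rule ex_mult_set_subset_INT[OF finite_lessThan])
qed

lemma mult_set_subset_Npos:
  assumes "q \<noteq> 0"
  shows "mult_set q \<subseteq> Npos"
  using assms by (auto simp: mult_set_def Npos_def Suc_le_eq)

lemma mult_set_in_superconnecting_filter:
  assumes "odd q" "squarefree q"
  shows "mult_set q \<in> superconnecting_filter"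
proof -
  define U where "U i = arith_prog (i + 1) q" for i :: nat
  have "openin kirch_topology (arith_prog c q) \<and> arith_prog c q \<noteq> {}" if "c \<in> {1, 2}" for c
    using that assms mem_arith_prog_self[of c q] by (auto intro!: openin_kirch_arith_prog)
  then have "\<forall>i<2. openin kirch_topology (U i) \<and> U i \<noteq> {}"
    by (simp add: U_def less_2_cases_iff)
  moreover have "{..<2::nat} = {0, 1}" "U 0 = arith_prog 1 q" "U 1 = arith_prog 2 q"
    by (auto simp only: U_def one_add_one add_0)
  then have "(\<Inter>i<2. kirch_topology closure_of (U i)) \<subseteq> mult_set q"
    using kirch_closure_Int_subset_mult_set[OF assms] by auto
  moreover have "mult_set q \<subseteq> Npos"
    using assms(2) by (metis mult_set_subset_Npos not_squarefree_0)
  ultimately show ?thesis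
    unfolding superconnecting_filter_def by (intro CollectI conjI exI[of _ 2]) auto
qed

lemma superconnecting_filter_upward_closed:
  assumes "A \<in> superconnecting_filter" "A \<subseteq> B" "B \<subseteq> Npos"
  shows "B \<in> superconnecting_filter"
  using assms unfolding superconnecting_filter_def by blast

theorem lemma3p7:
  shows "superconnecting_filter =
    {B. B \<subseteq> Npos \<and> (\<exists>q \<ge> 1. odd q \<and> squarefree q \<and> mult_set q \<subseteq> B)}"
proof (intro equalityI subsetI)
  fix B assume "B \<in> superconnecting_filter"
  then obtain n :: nat and U :: "nat \<Rightarrow> nat set" where B: "B \<subseteq> Npos"
    "\<forall>i<n. openin kirch_topology (U i) \<and> U i \<noteq> {}" "(\<Inter>i<n. kirch_topology closure_of (U i)) \<subseteq> B"
    by (auto simp: superconnecting_filter_def)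
  then obtain q where q: "odd q" "squarefree q" "mult_set q \<subseteq> B"
    using ex_mult_set_subset_INT_kirch_closure[OF B(2)] B(3) by (meson subset_trans)
  moreover have "q \<ge> 1"
    using q(2) by (cases q) auto
  ultimately show "B \<in> {B. B \<subseteq> Npos \<and> (\<exists>q \<ge> 1. odd q \<and> squarefree q \<and> mult_set q \<subseteq> B)}"
    using B(1) by blast
next
  fix B assume "B \<in> {B. B \<subseteq> Npos \<and> (\<exists>q \<ge> 1. odd q \<and> squarefree q \<and> mult_set q \<subseteq> B)}"
  then obtain q where "B \<subseteq> Npos" "odd q" "squarefree q" "mult_set q \<subseteq> B"
    by blast
  then show "B \<in> superconnecting_filter"
    using mult_set_in_superconnecting_filter superconnecting_filter_upward_closed by blast
qed

end
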